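(* Let $(X,\tau,I)$ be a $*$-extremally disconnected ideal topological space and $\gamma$ an operation on $\tau$ such that $(X,\tau)$ is $\gamma$-regular. For $V\subseteq X$ the following are equivalent: (1) $V$ is $\gamma$-open; (2) $V$ is $\alpha$-$I$-open and locally closed; (3) $V$ is pre-$\gamma$-$I$-open and locally closed; (4) $V$ is pre-$I$-open and locally closed; (5) $V$ is semi-$I$-open and locally closed; (6) $V$ is $b$-$I$-open and locally closed.
   Context: Let $(X,\tau)$ be a topological space; $Cl$ and $Int$ denote closure and interior in $\tau$. An ideal on $X$ is a nonempty family $I$ of subsets of $X$ such that $A\in I$, $B\subseteq A$ imply $B\in I$, and $A,B\in I$ imply $A\cup B\in I$; $(X,\tau,I)$ is then called an ideal topological space. An operation on $\tau$ is a map $\gamma:\tau\to P(X)$ with $V\subseteq\gamma(V)$ for all $V\in\tau$. A subset $A\subseteq X$ is $\gamma$-open if for every $x\in A$ there is $U\in\tau$ with $x\in U$ and $\gamma(U)\subseteq A$; $\tau_\gamma$ denotes the family of $\gamma$-open sets (so $\tau_\gamma\subseteq\tau$), and complements of $\gamma$-open sets are $\gamma$-closed. $\tau_\gamma\text{-}Int(A)$ is the union of all $\gamma$-open sets contained in $A$, and $\tau_\gamma\text{-}Cl(A)$ is the intersection of all $\gamma$-closed sets containing $A$. The local function of $A$ is $A^*=\{x\in X: U\cap A\notin I \text{ for every } U\in\tau \text{ with } x\in U\}$, and $Cl^*(A)=A\cup A^*$ (the closure operator of a topology $\tau^*$ finer than $\tau$). A subset $A$ is pre-$\gamma$-$I$-open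 if $A\subseteq \tau_\gamma\text{-}Int(Cl^*(A))$. The space $(X,\tau)$ is $\gamma$-regular if for each $x\in X$ and each open $V$ containing $x$ there is an open $U$ containing $x$ with $\gamma(U)\subseteq V$ (equivalently, $\tau_\gamma=\tau$). $(X,\tau,I)$ is $*$-extremally disconnected if $Cl^*(V)$ is open for every open $V\subseteq X$ (equivalently, $Cl^*(Int(V))\subseteq Int(Cl^*(V))$ for every $V\subseteq X$). A set $A$ is: $\alpha$-$I$-open if $A\subseteq Int(Cl^*(Int(A)))$; pre-$I$-open if $A\subseteq Int(Cl^*(A))$; semi-$I$-open if $A\subseteq Cl^*(Int(A))$; $b$-$I$-open if $A\subseteq Int(Cl^*(A))\cup Cl^*(Int(A))$; locally closed if $A=U\cap K$ for some open $U$ and some closed $K$ in $(X,\tau)$. *)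

theory Defs
  imports "HOL-Analysis.Analysis"
begin

definition ideal_on :: "'a set \<Rightarrow> 'a set set \<Rightarrow> bool" where
  "ideal_on X I \<longleftrightarrow> I \<noteq> {} \<and> (\<forall>A\<in>I. A \<subseteq> X)
     \<and> (\<forall>A B. A \<in> I \<and> B \<subseteq> A \<longrightarrow> B \<in> I)
     \<and> (\<forall>A B. A \<in> I \<and> B \<in> I \<longrightarrow> A \<union> B \<in> I)"

definition operation_on :: "'a topology \<Rightarrow> ('a set \<Rightarrow> 'a set) \<Rightarrow> bool" where
  "operation_on T \<gamma> \<longleftrightarrow> (\<forall>V. openin T V \<longrightarrow> V \<subseteq> \<gamma> V \<and> \<gamma> V \<subseteq> topspace T)"

definition gamma_open :: "'a topology \<Rightarrow> ('a set \<Rightarrow> 'a set) \<Rightarrow> 'a set \<Rightarrow> bool" where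
  "gamma_open T \<gamma> A \<longleftrightarrow> A \<subseteq> topspace T \<and>
     (\<forall>x\<in>A. \<exists>U. openin T U \<and> x \<in> U \<and> \<gamma> U \<subseteq> A)"

definition gamma_int :: "'a topology \<Rightarrow> ('a set \<Rightarrow> 'a set) \<Rightarrow> 'a set \<Rightarrow> 'a set" where
  "gamma_int T \<gamma> A = \<Union>{U. gamma_open T \<gamma> U \<and> U \<subseteq> A}"

definition gamma_regular :: "'a topology \<Rightarrow> ('a set \<Rightarrow> 'a set) \<Rightarrow> bool" where
  "gamma_regular T \<gamma> \<longleftrightarrow> (\<forall>x V. openin T V \<and> x \<in> V \<longrightarrow>
     (\<exists>U. openin T U \<and> x \<in> U \<and> \<gamma> U \<subseteq> V))"

definition local_fun :: "'a topology \<Rightarrow> 'a set set \<Rightarrow> 'a set \<Rightarrow> 'a set" where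
  "local_fun T I A = {x \<in> topspace T. \<forall>U. openin T U \<and> x \<in> U \<longrightarrow> U \<inter> A \<notin> I}"

definition cl_star :: "'a topology \<Rightarrow> 'a set set \<Rightarrow> 'a set \<Rightarrow> 'a set" where
  "cl_star T I A = A \<union> local_fun T I A"

definition star_extremally_disconnected :: "'a topology \<Rightarrow> 'a set set \<Rightarrow> bool" where
  "star_extremally_disconnected T I \<longleftrightarrow> (\<forall>V. openin T V \<longrightarrow> openin T (cl_star T I V))"

definition pre_gamma_I_open :: "'a topology \<Rightarrow> 'a set set \<Rightarrow> ('a set \<Rightarrow> 'a set) \<Rightarrow> 'a set \<Rightarrow> bool" where
  "pre_gamma_I_open T I \<gamma> A \<longleftrightarrow> A \<subseteq> gamma_int T \<gamma> (cl_star T I A)"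

definition alpha_I_open :: "'a topology \<Rightarrow> 'a set set \<Rightarrow> 'a set \<Rightarrow> bool" where
  "alpha_I_open T I A \<longleftrightarrow> A \<subseteq> T interior_of (cl_star T I (T interior_of A))"

definition pre_I_open :: "'a topology \<Rightarrow> 'a set set \<Rightarrow> 'a set \<Rightarrow> bool" where
  "pre_I_open T I A \<longleftrightarrow> A \<subseteq> T interior_of (cl_star T I A)"

definition semi_I_open :: "'a topology \<Rightarrow> 'a set set \<Rightarrow> 'a set \<Rightarrow> bool" where
  "semi_I_open T I A \<longleftrightarrow> A \<subseteq> cl_star T I (T interior_of A)"

definition b_I_open :: "'a topology \<Rightarrow> 'a set set \<Rightarrow> 'a set \<Rightarrow> bool" where
  "b_I_open T I A \<longleftrightarrow> A \<subseteq> T interior_of (cl_star T I A) \<union> cl_star T I (T interior_of A)"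

definition locally_closed_in :: "'a topology \<Rightarrow> 'a set \<Rightarrow> bool" where
  "locally_closed_in T A \<longleftrightarrow> (\<exists>U K. openin T U \<and> closedin T K \<and> A = U \<inter> K)"

end

theory Submission
  imports Defs
begin

text \<open>Under \<open>\<gamma>\<close>-regularity the \<open>\<gamma>\<close>-open sets are exactly the open sets, so every condition
  reduces to a statement about \<open>\<tau>\<close>. A locally closed set \<open>V = U \<inter> K\<close> has \<open>Cl\<^sup>*(V) \<subseteq> K\<close>, hence
  \<open>V = U \<inter> Int(Cl\<^sup>*(V))\<close> as soon as \<open>V\<close> is pre-\<open>I\<close>-open, and then \<open>V\<close> is open. In a
  \<open>*\<close>-extremally disconnected space \<open>Cl\<^sup>*(Int V) \<subseteq> Int(Cl\<^sup>*(V))\<close>, so semi-\<open>I\<close>-open and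
  \<open>b\<close>-\<open>I\<close>-open sets are pre-\<open>I\<close>-open, as are \<open>\<alpha>\<close>-\<open>I\<close>-open sets in any space.\<close>

lemma ideal_on_empty: "ideal_on X I \<Longrightarrow> {} \<in> I"
  unfolding ideal_on_def by blast

lemma cl_star_superset: "A \<subseteq> cl_star T I A"
  unfolding cl_star_def by blast

lemma local_fun_mono:
  assumes "ideal_on X I" "A \<subseteq> B"
  shows "local_fun T I A \<subseteq> local_fun T I B"
proof
  fix x assume x: "x \<in> local_fun T I A"
  have "U \<inter> B \<notin> I" if "openin T U" "x \<in> U" for U
  proof
    assume "U \<inter> B \<in> I"
    moreover have "U \<inter> A \<subseteq> U \<inter> B" using assms(2) by blast
    ultimately have "U \<inter> A \<in> I" using assms(1) unfolding ideal_on_def by blast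
    with x that show False unfolding local_fun_def by blast
  qed
  with x show "x \<in> local_fun T I B" unfolding local_fun_def by blast
qed

lemma cl_star_mono: "ideal_on X I \<Longrightarrow> A \<subseteq> B \<Longrightarrow> cl_star T I A \<subseteq> cl_star T I B"
  using local_fun_mono unfolding cl_star_def by blast

lemma cl_star_subset_closedin:
  assumes "ideal_on X I" "closedin T K" "A \<subseteq> K"
  shows "cl_star T I A \<subseteq> K"
proof -
  have "x \<in> K" if x: "x \<in> local_fun T I A" for x
  proof (rule ccontr)
    assume "x \<notin> K"
    moreover have "openin T (topspace T - K)" using assms(2) by blast
    moreover have "(topspace T - K) \<inter> A = {}" using assms(3) by blast
    ultimately show False using x ideal_on_empty[OF assms(1)] unfolding local_fun_def by auto
  qed
  with assms(3) show ?thesis unfolding cl_star_def by blast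
qed

lemma cl_star_interior_subset_interior_cl_star:
  assumes "ideal_on X I" "star_extremally_disconnected T I"
  shows "cl_star T I (T interior_of A) \<subseteq> T interior_of (cl_star T I A)"
proof (rule interior_of_maximal)
  show "cl_star T I (T interior_of A) \<subseteq> cl_star T I A"
    using cl_star_mono[OF assms(1) interior_of_subset] .
  show "openin T (cl_star T I (T interior_of A))"
    using assms(2) unfolding star_extremally_disconnected_def by simp
qed

lemma gamma_open_imp_openin:
  assumes "operation_on T \<gamma>" "gamma_open T \<gamma> A"
  shows "openin T A"
proof (subst openin_subopen, intro ballI)
  fix x assume "x \<in> A"
  then obtain U where U: "openin T U" "x \<in> U" "\<gamma> U \<subseteq> A"
    using assms(2) unfolding gamma_open_def by blast
  moreover have "U \<subseteq> \<gamma> U" using assms(1) U(1) unfolding operation_on_def by blast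
  ultimately show "\<exists>U. openin T U \<and> x \<in> U \<and> U \<subseteq> A" by blast
qed

lemma openin_imp_gamma_open: "gamma_regular T \<gamma> \<Longrightarrow> openin T A \<Longrightarrow> gamma_open T \<gamma> A"
  unfolding gamma_open_def gamma_regular_def using openin_subset by blast

lemma gamma_open_iff_openin:
  "operation_on T \<gamma> \<Longrightarrow> gamma_regular T \<gamma> \<Longrightarrow> gamma_open T \<gamma> A \<longleftrightarrow> openin T A"
  using gamma_open_imp_openin openin_imp_gamma_open by blast

lemma gamma_int_eq_interior_of:
  "operation_on T \<gamma> \<Longrightarrow> gamma_regular T \<gamma> \<Longrightarrow> gamma_int T \<gamma> A = T interior_of A"
  unfolding gamma_int_def interior_of_def by (simp add: gamma_open_iff_openin) blast

lemma openin_imp_locally_closed_in: "openin T V \<Longrightarrow> locally_closed_in T V"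
  unfolding locally_closed_in_def by (metis closedin_topspace inf.absorb1 openin_subset)

lemma openin_imp_pre_I_open: "openin T V \<Longrightarrow> pre_I_open T I V"
  unfolding pre_I_open_def by (meson cl_star_superset interior_of_maximal)

lemma openin_imp_alpha_I_open: "openin T V \<Longrightarrow> alpha_I_open T I V"
  using openin_imp_pre_I_open unfolding alpha_I_open_def pre_I_open_def
  by (simp add: interior_of_openin)

lemma openin_imp_semi_I_open: "openin T V \<Longrightarrow> semi_I_open T I V"
  unfolding semi_I_open_def by (simp add: interior_of_openin cl_star_superset)

lemma pre_I_open_imp_b_I_open: "pre_I_open T I V \<Longrightarrow> b_I_open T I V"
  unfolding pre_I_open_def b_I_open_def by blast

lemma alpha_I_open_imp_pre_I_open:
  assumes "ideal_on X I" "alpha_I_open T I V"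
  shows "pre_I_open T I V"
proof -
  have "cl_star T I (T interior_of V) \<subseteq> cl_star T I V"
    using cl_star_mono[OF assms(1) interior_of_subset] .
  with assms(2) show ?thesis
    unfolding alpha_I_open_def pre_I_open_def by (meson interior_of_mono order_trans)
qed

lemma b_I_open_imp_pre_I_open:
  "ideal_on X I \<Longrightarrow> star_extremally_disconnected T I \<Longrightarrow> b_I_open T I V \<Longrightarrow> pre_I_open T I V"
  using cl_star_interior_subset_interior_cl_star[of X I T V]
  unfolding b_I_open_def pre_I_open_def by blast

lemma semi_I_open_imp_pre_I_open:
  "ideal_on X I \<Longrightarrow> star_extremally_disconnected T I \<Longrightarrow> semi_I_open T I V \<Longrightarrow> pre_I_open T I V"
  using cl_star_interior_subset_interior_cl_star[of X I T V]
  unfolding semi_I_open_def pre_I_open_def by blast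

lemma locally_closed_pre_I_open_imp_openin:
  assumes "ideal_on X I" "locally_closed_in T V" "pre_I_open T I V"
  shows "openin T V"
proof -
  obtain U K where UK: "openin T U" "closedin T K" "V = U \<inter> K"
    using assms(2) unfolding locally_closed_in_def by blast
  have "V \<subseteq> K" using UK(3) by blast
  then have "cl_star T I V \<subseteq> K" by (rule cl_star_subset_closedin[OF assms(1) UK(2)])
  then have "T interior_of (cl_star T I V) \<subseteq> K"
    by (meson interior_of_subset order_trans)
  with assms(3) UK(3) have "V = U \<inter> T interior_of (cl_star T I V)"
    unfolding pre_I_open_def by auto
  with UK(1) show ?thesis by (metis openin_Int openin_interior_of)
qed

theorem theorem3p35:
  fixes T :: "'a topology" and I :: "'a set set" and \<gamma> :: "'a set \<Rightarrow> 'a set" and V :: "'a set"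
  assumes "ideal_on (topspace T) I"
    and "star_extremally_disconnected T I"
    and "operation_on T \<gamma>"
    and "gamma_regular T \<gamma>"
    and "V \<subseteq> topspace T"
  shows "(gamma_open T \<gamma> V \<longleftrightarrow> alpha_I_open T I V \<and> locally_closed_in T V)
       \<and> (gamma_open T \<gamma> V \<longleftrightarrow> pre_gamma_I_open T I \<gamma> V \<and> locally_closed_in T V)
       \<and> (gamma_open T \<gamma> V \<longleftrightarrow> pre_I_open T I V \<and> locally_closed_in T V)
       \<and> (gamma_open T \<gamma> V \<longleftrightarrow> semi_I_open T I V \<and> locally_closed_in T V)
       \<and> (gamma_open T \<gamma> V \<longleftrightarrow> b_I_open T I V \<and> locally_closed_in T V)"
proof -
  have pre_gamma: "pre_gamma_I_open T I \<gamma> V \<longleftrightarrow> pre_I_open T I V"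
    unfolding pre_gamma_I_open_def pre_I_open_def
    using gamma_int_eq_interior_of[OF assms(3,4)] by simp
  have open_iff_pre: "openin T V \<longleftrightarrow> pre_I_open T I V \<and> locally_closed_in T V"
    using openin_imp_pre_I_open[of T V I] openin_imp_locally_closed_in[of T V]
      locally_closed_pre_I_open_imp_openin[OF assms(1), of T V] by blast
  have "pre_I_open T I V \<longleftrightarrow> alpha_I_open T I V \<and> locally_closed_in T V"
    if "locally_closed_in T V"
    using open_iff_pre that openin_imp_alpha_I_open[of T V I]
      alpha_I_open_imp_pre_I_open[OF assms(1), of T V]
    by blast
  moreover have "pre_I_open T I V \<longleftrightarrow> semi_I_open T I V"
    if "locally_closed_in T V"
    using open_iff_pre that openin_imp_semi_I_open[of T V I]
      semi_I_open_imp_pre_I_open[OF assms(1,2), of V]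
    by blast
  moreover have "pre_I_open T I V \<longleftrightarrow> b_I_open T I V"
    using pre_I_open_imp_b_I_open[of T I V] b_I_open_imp_pre_I_open[OF assms(1,2), of V] by blast
  ultimately show ?thesis
    unfolding gamma_open_iff_openin[OF assms(3,4)] pre_gamma open_iff_pre by blast
qed

end
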